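(* Let $\Sigma\subseteq\mathcal L$ be closed under subformulas and let $\mathcal W=(W,\le,\ell,R)$ be a $\Sigma$-labelled system. Then its quotient $\mathcal Q=(W/{\sim},\le_{\mathcal Q},\ell_{\mathcal Q},R^+_{\mathcal Q})$ is a $\Sigma$-labelled system.
   Context: $\mathcal L$: formulas over propositional variables with $\wedge,\vee,\Rightarrow,\Leftarrow$ (co-implication), $\mathsf X,\mathsf Y,\mathsf G,\mathsf H,\mathsf U,\mathsf S$. Let $\Sigma\subseteq\mathcal L$ be closed under subformulas. A $\Sigma$-type is $\Phi\subseteq\Sigma$ such that: for $\varphi\wedge\psi\in\Sigma$, $\varphi\wedge\psi\in\Phi$ iff $\varphi,\psi\in\Phi$; for $\varphi\vee\psi\in\Sigma$, $\varphi\vee\psi\in\Phi$ iff $\varphi\in\Phi$ or $\psi\in\Phi$; for $\varphi\Rightarrow\psi\in\Sigma$, ($\varphi\Rightarrow\psi\in\Phi$ implies $\varphi\notin\Phi$ or $\psi\in\Phi$) and ($\psi\in\Phi$ implies $\varphi\Rightarrow\psi\in\Phi$); for $\varphi\Leftarrow\psi\in\Sigma$, ($\varphi\Leftarrow\psi\in\Phi$ implies $\varphi\in\Phi$) and ($\varphi\in\Phi,\psi\notin\Phi$ implies $\varphi\Leftarrow\psi\in\Phi$). A poset is locally linear if it is a disjoint union of linear posets; write $a\lessgtr b$ if $a\le b$ or $b\le a$. A $\Sigma$-labelled space is $(W,\le,\ell)$ with $(W,\le)$ locally linear, $\ell\colon W\to$ $\Sigma$-types, $w\le v\Rightarrow\ell(w)\supseteq\ell(v)$,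 such that whenever $\varphi\Rightarrow\psi\in\Sigma\setminus\ell(w)$ there is $v\le w$ with $\varphi\in\ell(v)$, $\psi\notin\ell(v)$, and whenever $\varphi\Leftarrow\psi\in\ell(w)$ there is $v\ge w$ with $\varphi\in\ell(v)$, $\psi\notin\ell(v)$. A relation $R\subseteq W\times W$ is convex if every image set and every preimage set of a point is convex in $\le$; fully confluent if (forth–down) $x\le x'Ry'$ implies $xRy\le y'$ for some $y$; (forth–up) $x'\ge xRy$ implies $x'Ry'\ge y$ for some $y'$; (back–down) $x'Ry'\ge y$ implies $x'\ge xRy$ for some $x$; (back–up) $xRy\le y'$ implies $x\le x'Ry'$ for some $x'$; bi-serial if every point has an $R$-successor and an $R$-predecessor. A pair $(\Phi,\Psi)$ of $\Sigma$-types is sensible if for formulas in $\Sigma$: $\mathsf X\varphi\in\Phi\iff\varphi\in\Psi$; $\mathsf Y\varphi\in\Psi\iff\varphi\in\Phi$; $\mathsf G\varphi\in\Phi\iff(\varphi\in\Phi\wedge\mathsf G\varphi\in\Psi)$; $\mathsf H\varphi\in\Psi\iff(\varphi\in\Psi\wedge\mathsf H\varphi\in\Phi)$; $\varphi\,\mathsf U\,\psi\in\Phi\iff(\psi\in\Phi$ or ($\varphi\in\Phi$ and $\varphi\,\mathsf U\,\psi\in\Psi$)); $\varphi\,\mathsf S\,\psi\in\Psi\iff(\psi\in\Psi$ or ($\varphi\in\Psi$ and $\varphi\,\mathsf S\,\psi\in\Phi$)). $R$ is sensible if $wRv$ implies $(\ell(w),\ell(v))$ sensible. A $\Sigma$-labelled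 system is a $\Sigma$-labelled space with a bi-serial, fully confluent, convex, sensible relation. Quotient: for $w\in W$ let $L(w)=\{\ell(v): v\lessgtr w\}$; $w\sim v$ iff $\ell(w)=\ell(v)$ and $L(w)=L(v)$. On $W/{\sim}$: $[w]\le_{\mathcal Q}[v]$ iff $L(w)=L(v)$ and $\ell(w)\supseteq\ell(v)$; $\ell_{\mathcal Q}([w])=\ell(w)$; $R_{\mathcal Q}$ is the smallest relation with $wRv\Rightarrow[w]R_{\mathcal Q}[v]$; $X R^+_{\mathcal Q} Y$ iff there are $X_1\le_{\mathcal Q}X\le_{\mathcal Q}X_2$ and $Y_1\le_{\mathcal Q}Y\le_{\mathcal Q}Y_2$ with $X_2R_{\mathcal Q}Y_1$ and $X_1R_{\mathcal Q}Y_2$. *)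

theory Defs
  imports Main "HOL-Library.Disjoint_Sets"
begin

datatype 'a fml =
    Var 'a
  | And "'a fml" "'a fml"
  | Or "'a fml" "'a fml"
  | Imp "'a fml" "'a fml"
  | Coimp "'a fml" "'a fml"   (* Coimp a b  represents  a \<Leftarrow> b *)
  | Nxt "'a fml"
  | Prv "'a fml"
  | Glob "'a fml"
  | Hist "'a fml"
  | Until "'a fml" "'a fml"
  | Since "'a fml" "'a fml"

fun subfmls :: "'a fml \<Rightarrow> 'a fml set" where
  "subfmls (Var p) = {Var p}"
| "subfmls (And a b) = insert (And a b) (subfmls a \<union> subfmls b)"
| "subfmls (Or a b) = insert (Or a b) (subfmls a \<union> subfmls b)"
| "subfmls (Imp a b) = insert (Imp a b) (subfmls a \<union> subfmls b)"
| "subfmls (Coimp a b) = insert (Coimp a b) (subfmls a \<union> subfmls b)"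
| "subfmls (Nxt a) = insert (Nxt a) (subfmls a)"
| "subfmls (Prv a) = insert (Prv a) (subfmls a)"
| "subfmls (Glob a) = insert (Glob a) (subfmls a)"
| "subfmls (Hist a) = insert (Hist a) (subfmls a)"
| "subfmls (Until a b) = insert (Until a b) (subfmls a \<union> subfmls b)"
| "subfmls (Since a b) = insert (Since a b) (subfmls a \<union> subfmls b)"

definition subfml_closed :: "'a fml set \<Rightarrow> bool" where
  "subfml_closed \<Sigma> \<longleftrightarrow> (\<forall>\<phi>\<in>\<Sigma>. subfmls \<phi> \<subseteq> \<Sigma>)"

definition is_type :: "'a fml set \<Rightarrow> 'a fml set \<Rightarrow> bool" where
  "is_type \<Sigma> \<Phi> \<longleftrightarrow> \<Phi> \<subseteq> \<Sigma> \<and>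
    (\<forall>a b. And a b \<in> \<Sigma> \<longrightarrow> (And a b \<in> \<Phi> \<longleftrightarrow> a \<in> \<Phi> \<and> b \<in> \<Phi>)) \<and>
    (\<forall>a b. Or a b \<in> \<Sigma> \<longrightarrow> (Or a b \<in> \<Phi> \<longleftrightarrow> a \<in> \<Phi> \<or> b \<in> \<Phi>)) \<and>
    (\<forall>a b. Imp a b \<in> \<Sigma> \<longrightarrow>
        (Imp a b \<in> \<Phi> \<longrightarrow> a \<notin> \<Phi> \<or> b \<in> \<Phi>) \<and> (b \<in> \<Phi> \<longrightarrow> Imp a b \<in> \<Phi>)) \<and>
    (\<forall>a b. Coimp a b \<in> \<Sigma> \<longrightarrow>
        (Coimp a b \<in> \<Phi> \<longrightarrow> a \<in> \<Phi>) \<and> (a \<in> \<Phi> \<and> b \<notin> \<Phi> \<longrightarrow> Coimp a b \<in> \<Phi>))"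

definition poset_on :: "'w set \<Rightarrow> ('w \<Rightarrow> 'w \<Rightarrow> bool) \<Rightarrow> bool" where
  "poset_on W le \<longleftrightarrow> (\<forall>x\<in>W. le x x) \<and>
     (\<forall>x\<in>W. \<forall>y\<in>W. le x y \<and> le y x \<longrightarrow> x = y) \<and>
     (\<forall>x\<in>W. \<forall>y\<in>W. \<forall>z\<in>W. le x y \<and> le y z \<longrightarrow> le x z)"

definition comparable :: "('w \<Rightarrow> 'w \<Rightarrow> bool) \<Rightarrow> 'w \<Rightarrow> 'w \<Rightarrow> bool" where
  "comparable le a b \<longleftrightarrow> le a b \<or> le b a"

definition locally_linear :: "'w set \<Rightarrow> ('w \<Rightarrow> 'w \<Rightarrow> bool) \<Rightarrow> bool" where
  "locally_linear W le \<longleftrightarrow> poset_on W le \<and>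
     (\<exists>P. partition_on W P \<and>
        (\<forall>C\<in>P. \<forall>a\<in>C. \<forall>b\<in>C. comparable le a b) \<and>
        (\<forall>C\<in>P. \<forall>D\<in>P. C \<noteq> D \<longrightarrow> (\<forall>a\<in>C. \<forall>b\<in>D. \<not> comparable le a b)))"

definition labelled_space ::
  "'a fml set \<Rightarrow> 'w set \<Rightarrow> ('w \<Rightarrow> 'w \<Rightarrow> bool) \<Rightarrow> ('w \<Rightarrow> 'a fml set) \<Rightarrow> bool" where
  "labelled_space \<Sigma> W le lab \<longleftrightarrow> locally_linear W le \<and>
     (\<forall>w\<in>W. is_type \<Sigma> (lab w)) \<and>
     (\<forall>w\<in>W. \<forall>v\<in>W. le w v \<longrightarrow> lab v \<subseteq> lab w) \<and>
     (\<forall>w\<in>W. \<forall>a b. Imp a b \<in> \<Sigma> - lab w \<longrightarrow>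
        (\<exists>v\<in>W. le v w \<and> a \<in> lab v \<and> b \<notin> lab v)) \<and>
     (\<forall>w\<in>W. \<forall>a b. Coimp a b \<in> lab w \<longrightarrow>
        (\<exists>v\<in>W. le w v \<and> a \<in> lab v \<and> b \<notin> lab v))"

definition convex_set :: "'w set \<Rightarrow> ('w \<Rightarrow> 'w \<Rightarrow> bool) \<Rightarrow> 'w set \<Rightarrow> bool" where
  "convex_set W le A \<longleftrightarrow> (\<forall>a\<in>A. \<forall>b\<in>A. \<forall>c\<in>W. le a c \<and> le c b \<longrightarrow> c \<in> A)"

definition convex_rel :: "'w set \<Rightarrow> ('w \<Rightarrow> 'w \<Rightarrow> bool) \<Rightarrow> ('w \<Rightarrow> 'w \<Rightarrow> bool) \<Rightarrow> bool" where
  "convex_rel W le R \<longleftrightarrow>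
     (\<forall>x\<in>W. convex_set W le {y\<in>W. R x y} \<and> convex_set W le {y\<in>W. R y x})"

definition fully_confluent :: "'w set \<Rightarrow> ('w \<Rightarrow> 'w \<Rightarrow> bool) \<Rightarrow> ('w \<Rightarrow> 'w \<Rightarrow> bool) \<Rightarrow> bool" where
  "fully_confluent W le R \<longleftrightarrow>
     (\<forall>x\<in>W. \<forall>x'\<in>W. \<forall>y'\<in>W. le x x' \<and> R x' y' \<longrightarrow> (\<exists>y\<in>W. R x y \<and> le y y')) \<and>
     (\<forall>x\<in>W. \<forall>x'\<in>W. \<forall>y\<in>W. le x x' \<and> R x y \<longrightarrow> (\<exists>y'\<in>W. R x' y' \<and> le y y')) \<and>
     (\<forall>x'\<in>W. \<forall>y'\<in>W. \<forall>y\<in>W. R x' y' \<and> le y y' \<longrightarrow> (\<exists>x\<in>W. le x x' \<and> R x y)) \<and>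
     (\<forall>x\<in>W. \<forall>y\<in>W. \<forall>y'\<in>W. R x y \<and> le y y' \<longrightarrow> (\<exists>x'\<in>W. le x x' \<and> R x' y'))"

definition bi_serial :: "'w set \<Rightarrow> ('w \<Rightarrow> 'w \<Rightarrow> bool) \<Rightarrow> bool" where
  "bi_serial W R \<longleftrightarrow> (\<forall>x\<in>W. (\<exists>y\<in>W. R x y) \<and> (\<exists>y\<in>W. R y x))"

definition sensible_pair :: "'a fml set \<Rightarrow> 'a fml set \<Rightarrow> 'a fml set \<Rightarrow> bool" where
  "sensible_pair \<Sigma> \<Phi> \<Psi> \<longleftrightarrow>
     (\<forall>a. Nxt a \<in> \<Sigma> \<longrightarrow> (Nxt a \<in> \<Phi> \<longleftrightarrow> a \<in> \<Psi>)) \<and>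
     (\<forall>a. Prv a \<in> \<Sigma> \<longrightarrow> (Prv a \<in> \<Psi> \<longleftrightarrow> a \<in> \<Phi>)) \<and>
     (\<forall>a. Glob a \<in> \<Sigma> \<longrightarrow> (Glob a \<in> \<Phi> \<longleftrightarrow> a \<in> \<Phi> \<and> Glob a \<in> \<Psi>)) \<and>
     (\<forall>a. Hist a \<in> \<Sigma> \<longrightarrow> (Hist a \<in> \<Psi> \<longleftrightarrow> a \<in> \<Psi> \<and> Hist a \<in> \<Phi>)) \<and>
     (\<forall>a b. Until a b \<in> \<Sigma> \<longrightarrow>
        (Until a b \<in> \<Phi> \<longleftrightarrow> b \<in> \<Phi> \<or> (a \<in> \<Phi> \<and> Until a b \<in> \<Psi>))) \<and>
     (\<forall>a b. Since a b \<in> \<Sigma> \<longrightarrow>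
        (Since a b \<in> \<Psi> \<longleftrightarrow> b \<in> \<Psi> \<or> (a \<in> \<Psi> \<and> Since a b \<in> \<Phi>)))"

definition labelled_system ::
  "'a fml set \<Rightarrow> 'w set \<Rightarrow> ('w \<Rightarrow> 'w \<Rightarrow> bool) \<Rightarrow> ('w \<Rightarrow> 'a fml set)
     \<Rightarrow> ('w \<Rightarrow> 'w \<Rightarrow> bool) \<Rightarrow> bool" where
  "labelled_system \<Sigma> W le lab R \<longleftrightarrow> labelled_space \<Sigma> W le lab \<and>
     (\<forall>x y. R x y \<longrightarrow> x \<in> W \<and> y \<in> W) \<and>
     bi_serial W R \<and> fully_confluent W le R \<and> convex_rel W le R \<and>
     (\<forall>w\<in>W. \<forall>v\<in>W. R w v \<longrightarrow> sensible_pair \<Sigma> (lab w) (lab v))"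

definition Lset :: "'w set \<Rightarrow> ('w \<Rightarrow> 'w \<Rightarrow> bool) \<Rightarrow> ('w \<Rightarrow> 'a fml set) \<Rightarrow> 'w \<Rightarrow> 'a fml set set" where
  "Lset W le lab w = {lab v | v. v \<in> W \<and> comparable le v w}"

definition simrel :: "'w set \<Rightarrow> ('w \<Rightarrow> 'w \<Rightarrow> bool) \<Rightarrow> ('w \<Rightarrow> 'a fml set) \<Rightarrow> 'w rel" where
  "simrel W le lab = {(w, v). w \<in> W \<and> v \<in> W \<and> lab w = lab v \<and>
                               Lset W le lab w = Lset W le lab v}"

definition quotW :: "'w set \<Rightarrow> ('w \<Rightarrow> 'w \<Rightarrow> bool) \<Rightarrow> ('w \<Rightarrow> 'a fml set) \<Rightarrow> 'w set set" where
  "quotW W le lab = W // simrel W le lab"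

text \<open>On classes [w], [v]: L(w) = L(v) and l(w) \<supseteq> l(v) (representative-independent).\<close>
definition quot_le :: "'w set \<Rightarrow> ('w \<Rightarrow> 'w \<Rightarrow> bool) \<Rightarrow> ('w \<Rightarrow> 'a fml set) \<Rightarrow> 'w set \<Rightarrow> 'w set \<Rightarrow> bool" where
  "quot_le W le lab X Y \<longleftrightarrow> (\<exists>w\<in>X. \<exists>v\<in>Y.
      Lset W le lab w = Lset W le lab v \<and> lab v \<subseteq> lab w)"

definition quot_lab :: "('w \<Rightarrow> 'a fml set) \<Rightarrow> 'w set \<Rightarrow> 'a fml set" where
  "quot_lab lab X = lab (SOME w. w \<in> X)"

definition quot_R :: "'w set \<Rightarrow> ('w \<Rightarrow> 'w \<Rightarrow> bool) \<Rightarrow> ('w \<Rightarrow> 'a fml set) \<Rightarrow> ('w \<Rightarrow> 'w \<Rightarrow> bool)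
     \<Rightarrow> 'w set \<Rightarrow> 'w set \<Rightarrow> bool" where
  "quot_R W le lab R X Y \<longleftrightarrow> (\<exists>w v. R w v \<and> X = simrel W le lab `` {w} \<and> Y = simrel W le lab `` {v})"

definition quot_Rplus :: "'w set \<Rightarrow> ('w \<Rightarrow> 'w \<Rightarrow> bool) \<Rightarrow> ('w \<Rightarrow> 'a fml set) \<Rightarrow> ('w \<Rightarrow> 'w \<Rightarrow> bool)
     \<Rightarrow> 'w set \<Rightarrow> 'w set \<Rightarrow> bool" where
  "quot_Rplus W le lab R X Y \<longleftrightarrow> X \<in> quotW W le lab \<and> Y \<in> quotW W le lab \<and>
     (\<exists>X1\<in>quotW W le lab. \<exists>X2\<in>quotW W le lab. \<exists>Y1\<in>quotW W le lab. \<exists>Y2\<in>quotW W le lab.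
        quot_le W le lab X1 X \<and> quot_le W le lab X X2 \<and>
        quot_le W le lab Y1 Y \<and> quot_le W le lab Y Y2 \<and>
        quot_R W le lab R X2 Y1 \<and> quot_R W le lab R X1 Y2)"

end

theory Submission
  imports Defs
begin

text \<open>The quotient map \<open>w \<mapsto> [w]\<close> is onto \<open>W/\<sim>\<close>, and \<open>\<le>\<^sub>Q\<close>, \<open>\<ell>\<^sub>Q\<close>, \<open>R\<^sup>+\<^sub>Q\<close>
  are the images of relations on representatives: \<open>x \<sqsubseteq> y\<close> iff \<open>L(x) = L(y)\<close> and
  \<open>\<ell>(x) \<supseteq> \<ell>(y)\<close>, and \<open>x R\<^sup>+ y\<close> iff \<open>x\<close> lies \<open>\<sqsubseteq>\<close>-between the sources and \<open>y\<close>
  \<open>\<sqsubseteq>\<close>-between the targets of two \<open>R\<close>-edges. So every condition of a labelled system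
  transfers from \<open>(W, \<sqsubseteq>, \<ell>, R\<^sup>+)\<close> to the quotient, except antisymmetry, which holds there
  because the kernel of \<open>\<sqsubseteq>\<close> is \<open>\<sim>\<close>; the \<open>\<sqsubseteq>\<close>-comparability classes are the classes
  of equal \<open>L\<close>, which gives local linearity.

  The confluence conditions for \<open>R\<^sup>+\<close> follow from those of \<open>R\<close> because \<open>\<sqsubseteq>\<close> is \<open>\<le>\<close>
  up to \<open>\<sim>\<close>: if \<open>x \<sqsubseteq> y\<close> then \<open>x' \<le> y\<close> for some \<open>x' \<sim> x\<close>, and \<open>x \<le> y'\<close> for some
  \<open>y' \<sim> y\<close>. Convexity of \<open>R\<^sup>+\<close> is built into its definition. For sensibility, pushing
  the two \<open>R\<close>-edges that witness \<open>x R\<^sup>+ y\<close> along \<open>\<le>\<close> yields \<open>R\<close>-edges whose labels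
  bound \<open>\<ell>(x)\<close> and \<open>\<ell>(y)\<close> from both sides.\<close>

lemma comparable_sym: "comparable le a b \<Longrightarrow> comparable le b a"
  unfolding comparable_def by blast

lemma locally_linear_comparable_trans:
  assumes "locally_linear W le" "a \<in> W" "b \<in> W" "c \<in> W"
    and "comparable le a b" "comparable le b c"
  shows "comparable le a c"
proof -
  obtain P where P: "partition_on W P" "\<forall>C\<in>P. \<forall>a\<in>C. \<forall>b\<in>C. comparable le a b"
    "\<forall>C\<in>P. \<forall>D\<in>P. C \<noteq> D \<longrightarrow> (\<forall>a\<in>C. \<forall>b\<in>D. \<not> comparable le a b)"
    using assms(1) unfolding locally_linear_def by blast
  obtain A B C where "A \<in> P" "B \<in> P" "C \<in> P" "a \<in> A" "b \<in> B" "c \<in> C"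
    using P(1) assms(2-4) unfolding partition_on_def by blast
  then show ?thesis using P(2,3) assms(5,6) by metis
qed

lemma locally_linear_if_comparable_trans:
  assumes "poset_on W le"
    and trans: "\<And>a b c. a \<in> W \<Longrightarrow> b \<in> W \<Longrightarrow> c \<in> W \<Longrightarrow>
      comparable le a b \<Longrightarrow> comparable le b c \<Longrightarrow> comparable le a c"
  shows "locally_linear W le"
proof -
  define E where "E = {(a, b). a \<in> W \<and> b \<in> W \<and> comparable le a b}"
  have E: "equiv W E"
    using assms unfolding E_def equiv_def refl_on_def sym_def trans_def poset_on_def comparable_def
    by blast
  have same_block: "(a, b) \<in> E \<longleftrightarrow> C = D"
    if "C \<in> W // E" "D \<in> W // E" "a \<in> C" "b \<in> D" for C D a b
    using quotient_eq_iff[OF E that] by simp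
  show ?thesis
    unfolding locally_linear_def
  proof (intro conjI exI[of _ "W // E"] ballI impI)
    show "partition_on W (W // E)"
      using E by (rule partition_on_quotient)
  next
    fix C a b assume "C \<in> W // E" "a \<in> C" "b \<in> C"
    then show "comparable le a b"
      using same_block unfolding E_def by blast
  next
    fix C D a b assume "C \<in> W // E" "D \<in> W // E" "C \<noteq> D" "a \<in> C" "b \<in> D"
    moreover have "a \<in> W" "b \<in> W"
      using calculation Union_quotient[OF E] by blast+
    ultimately show "\<not> comparable le a b"
      using same_block unfolding E_def by blast
  qed (use assms(1) in blast)
qed

lemma locally_linear_image:
  assumes le: "\<And>x y. x \<in> W \<Longrightarrow> y \<in> W \<Longrightarrow> le' (q x) (q y) \<longleftrightarrow> le x y"
    and refl: "\<And>x. x \<in> W \<Longrightarrow> le x x"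
    and trans: "\<And>x y z. x \<in> W \<Longrightarrow> y \<in> W \<Longrightarrow> z \<in> W \<Longrightarrow> le x y \<Longrightarrow> le y z \<Longrightarrow> le x z"
    and kernel: "\<And>x y. x \<in> W \<Longrightarrow> y \<in> W \<Longrightarrow> le x y \<Longrightarrow> le y x \<Longrightarrow> q x = q y"
    and comparable_trans: "\<And>x y z. x \<in> W \<Longrightarrow> y \<in> W \<Longrightarrow> z \<in> W \<Longrightarrow>
      comparable le x y \<Longrightarrow> comparable le y z \<Longrightarrow> comparable le x z"
  shows "locally_linear (q ` W) le'"
proof (rule locally_linear_if_comparable_trans)
  show "poset_on (q ` W) le'"
    unfolding poset_on_def by (auto simp: le refl intro: kernel trans)
  have comparable: "comparable le' (q x) (q y) \<longleftrightarrow> comparable le x y" if "x \<in> W" "y \<in> W" for x y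
    using le[OF that] le[OF that(2,1)] unfolding comparable_def by blast
  show "comparable le' X Z"
    if "X \<in> q ` W" "Y \<in> q ` W" "Z \<in> q ` W" "comparable le' X Y" "comparable le' Y Z" for X Y Z
    using that comparable comparable_trans by blast
qed

lemma bi_serial_image:
  assumes "\<And>x y. x \<in> W \<Longrightarrow> y \<in> W \<Longrightarrow> R' (q x) (q y) \<longleftrightarrow> R x y"
  shows "bi_serial (q ` W) R' \<longleftrightarrow> bi_serial W R"
  using assms unfolding bi_serial_def by auto

lemma fully_confluent_image:
  assumes "\<And>x y. x \<in> W \<Longrightarrow> y \<in> W \<Longrightarrow> le' (q x) (q y) \<longleftrightarrow> le x y"
    and "\<And>x y. x \<in> W \<Longrightarrow> y \<in> W \<Longrightarrow> R' (q x) (q y) \<longleftrightarrow> R x y"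
  shows "fully_confluent (q ` W) le' R' \<longleftrightarrow> fully_confluent W le R"
  using assms unfolding fully_confluent_def by auto

lemma convex_rel_iff:
  "convex_rel W le R \<longleftrightarrow> (\<forall>x\<in>W. \<forall>a\<in>W. \<forall>b\<in>W. \<forall>c\<in>W. le a c \<and> le c b \<longrightarrow>
     (R x a \<and> R x b \<longrightarrow> R x c) \<and> (R a x \<and> R b x \<longrightarrow> R c x))"
  unfolding convex_rel_def convex_set_def by blast

lemma convex_rel_image:
  assumes "\<And>x y. x \<in> W \<Longrightarrow> y \<in> W \<Longrightarrow> le' (q x) (q y) \<longleftrightarrow> le x y"
    and "\<And>x y. x \<in> W \<Longrightarrow> y \<in> W \<Longrightarrow> R' (q x) (q y) \<longleftrightarrow> R x y"
  shows "convex_rel (q ` W) le' R' \<longleftrightarrow> convex_rel W le R"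
  using assms unfolding convex_rel_iff by auto

lemma labelled_space_image_coarser:
  assumes space: "labelled_space \<Sigma> W le lab"
    and le_lec: "\<And>x y. x \<in> W \<Longrightarrow> y \<in> W \<Longrightarrow> le x y \<Longrightarrow> lec x y"
    and lec_lab: "\<And>x y. x \<in> W \<Longrightarrow> y \<in> W \<Longrightarrow> lec x y \<Longrightarrow> lab y \<subseteq> lab x"
    and le': "\<And>x y. x \<in> W \<Longrightarrow> y \<in> W \<Longrightarrow> le' (q x) (q y) \<longleftrightarrow> lec x y"
    and lab': "\<And>x. x \<in> W \<Longrightarrow> lab' (q x) = lab x"
    and "locally_linear (q ` W) le'"
  shows "labelled_space \<Sigma> (q ` W) le' lab'"
proof -
  have "\<forall>w\<in>W. \<forall>a b. Imp a b \<in> \<Sigma> - lab w \<longrightarrow> (\<exists>v\<in>W. lec v w \<and> a \<in> lab v \<and> b \<notin> lab v)"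
    and "\<forall>w\<in>W. \<forall>a b. Coimp a b \<in> lab w \<longrightarrow> (\<exists>v\<in>W. lec w v \<and> a \<in> lab v \<and> b \<notin> lab v)"
    and "\<forall>w\<in>W. is_type \<Sigma> (lab w)"
    using space le_lec unfolding labelled_space_def by meson+
  then show ?thesis
    using assms(6) unfolding labelled_space_def by (auto simp: le' lab' lec_lab)
qed

text \<open>For fixed \<open>A\<close>, the \<open>X\<close>, \<open>G\<close>, \<open>U\<close> clauses hold for every \<open>B\<close> between two sets
  for which they hold; dually for the \<open>Y\<close>, \<open>H\<close>, \<open>S\<close> clauses in \<open>A\<close>.\<close>

lemma sensible_pair_sandwich:
  assumes "sensible_pair \<Sigma> A B\<^sub>1" "B \<subseteq> B\<^sub>1" "sensible_pair \<Sigma> A\<^sub>1 B" "A\<^sub>1 \<subseteq> A"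
    and "sensible_pair \<Sigma> A\<^sub>2 B" "A \<subseteq> A\<^sub>2" "sensible_pair \<Sigma> A B\<^sub>2" "B\<^sub>2 \<subseteq> B"
  shows "sensible_pair \<Sigma> A B"
  using assms unfolding sensible_pair_def subset_iff by (intro conjI allI impI) metis+

locale labelled_sys =
  fixes \<Sigma> :: "'a fml set" and W :: "'w set" and le R :: "'w \<Rightarrow> 'w \<Rightarrow> bool"
    and lab :: "'w \<Rightarrow> 'a fml set"
  assumes system: "labelled_system \<Sigma> W le lab R"
begin

abbreviation L :: "'w \<Rightarrow> 'a fml set set" where "L \<equiv> Lset W le lab"
abbreviation sim :: "'w rel" where "sim \<equiv> simrel W le lab"
abbreviation cls :: "'w \<Rightarrow> 'w set" where "cls x \<equiv> sim `` {x}"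

lemma space: "labelled_space \<Sigma> W le lab"
  using system unfolding labelled_system_def by blast

lemma R_dom: "R x y \<Longrightarrow> x \<in> W \<and> y \<in> W"
  using system unfolding labelled_system_def by blast

lemma le_locally_linear: "locally_linear W le"
  using space unfolding labelled_space_def by blast

lemma le_refl: "x \<in> W \<Longrightarrow> le x x"
  using le_locally_linear unfolding locally_linear_def poset_on_def by (simp add: Ball_def)

lemma lab_antimono: "w \<in> W \<Longrightarrow> v \<in> W \<Longrightarrow> le w v \<Longrightarrow> lab v \<subseteq> lab w"
  using space unfolding labelled_space_def by blast

lemma sensible_R: "R w v \<Longrightarrow> sensible_pair \<Sigma> (lab w) (lab v)"
  using system R_dom unfolding labelled_system_def by blast

lemma R_fully_confluent: "fully_confluent W le R"
  using system unfolding labelled_system_def by blast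

lemma
  shows forth_down: "le x x' \<Longrightarrow> R x' y' \<Longrightarrow> x \<in> W \<Longrightarrow> \<exists>y\<in>W. R x y \<and> le y y'"
    and forth_up: "le x x' \<Longrightarrow> R x y \<Longrightarrow> x' \<in> W \<Longrightarrow> \<exists>y'\<in>W. R x' y' \<and> le y y'"
    and back_down: "R x' y' \<Longrightarrow> le y y' \<Longrightarrow> y \<in> W \<Longrightarrow> \<exists>x\<in>W. le x x' \<and> R x y"
    and back_up: "R x y \<Longrightarrow> le y y' \<Longrightarrow> y' \<in> W \<Longrightarrow> \<exists>x'\<in>W. le x x' \<and> R x' y'"
  using R_fully_confluent R_dom unfolding fully_confluent_def by blast+

lemma Lset_eq_if_comparable:
  assumes "u \<in> W" "v \<in> W" "comparable le u v"
  shows "L u = L v"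
proof -
  have "comparable le z u \<longleftrightarrow> comparable le z v" if "z \<in> W" for z
    using locally_linear_comparable_trans[OF le_locally_linear] comparable_sym assms that by metis
  then show ?thesis
    unfolding Lset_def by blast
qed

lemma lab_in_Lset: "u \<in> W \<Longrightarrow> lab u \<in> L u"
  using le_refl unfolding Lset_def comparable_def by blast

lemma sim_iff: "(x, y) \<in> sim \<longleftrightarrow> x \<in> W \<and> y \<in> W \<and> lab x = lab y \<and> L x = L y"
  unfolding simrel_def by blast

lemma sim_refl: "x \<in> W \<Longrightarrow> (x, x) \<in> sim"
  by (simp add: sim_iff)

lemma equiv_sim: "equiv W sim"
  unfolding equiv_def refl_on_def sym_def trans_def simrel_def by auto

lemma cls_eq_iff: "x \<in> W \<Longrightarrow> y \<in> W \<Longrightarrow> cls x = cls y \<longleftrightarrow> lab x = lab y \<and> L x = L y"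
  by (simp add: eq_equiv_class_iff[OF equiv_sim] sim_iff)

lemma quotW_eq: "quotW W le lab = cls ` W"
  by (simp add: quotW_def quotient_def UNION_singleton_eq_range)

lemma quot_lab_cls: "x \<in> W \<Longrightarrow> quot_lab lab (cls x) = lab x"
proof -
  assume "x \<in> W"
  then have "x \<in> cls x" by (simp add: sim_refl)
  then show ?thesis
    unfolding quot_lab_def by (rule someI2) (simp add: sim_iff)
qed

text \<open>\<open>\<le>\<^sub>Q\<close> and \<open>R\<^sup>+\<^sub>Q\<close> read on representatives, written \<open>\<sqsubseteq>\<close> and \<open>R\<^sup>+\<close> above.\<close>

definition rep_le :: "'w \<Rightarrow> 'w \<Rightarrow> bool" where
  "rep_le x y \<longleftrightarrow> L x = L y \<and> lab y \<subseteq> lab x"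

definition rep_R :: "'w \<Rightarrow> 'w \<Rightarrow> bool" where
  "rep_R x y \<longleftrightarrow> (\<exists>w\<^sub>1 w\<^sub>2 v\<^sub>1 v\<^sub>2. R w\<^sub>2 v\<^sub>1 \<and> R w\<^sub>1 v\<^sub>2 \<and>
     rep_le w\<^sub>1 x \<and> rep_le x w\<^sub>2 \<and> rep_le v\<^sub>1 y \<and> rep_le y v\<^sub>2)"

lemma rep_le_refl: "rep_le x x"
  unfolding rep_le_def by blast

lemma rep_le_trans: "rep_le x y \<Longrightarrow> rep_le y z \<Longrightarrow> rep_le x z"
  unfolding rep_le_def by blast

lemma rep_le_if_le: "x \<in> W \<Longrightarrow> y \<in> W \<Longrightarrow> le x y \<Longrightarrow> rep_le x y"
  unfolding rep_le_def using Lset_eq_if_comparable[of x y] lab_antimono[of x y]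
  by (simp add: comparable_def)

lemma lab_comparable_if_Lset_eq:
  assumes "x \<in> W" "y \<in> W" "L x = L y"
  shows "lab x \<subseteq> lab y \<or> lab y \<subseteq> lab x"
proof -
  have "lab y \<in> L x"
    using lab_in_Lset[OF assms(2)] assms(3) by simp
  then obtain z where z: "z \<in> W" "comparable le z x" "lab z = lab y"
    unfolding Lset_def by blast
  then show ?thesis
    using lab_antimono[OF z(1) assms(1)] lab_antimono[OF assms(1) z(1)]
    unfolding comparable_def by blast
qed

lemma rep_le_comparable_iff:
  assumes "x \<in> W" "y \<in> W"
  shows "comparable rep_le x y \<longleftrightarrow> L x = L y"
  using lab_comparable_if_Lset_eq[OF assms] unfolding comparable_def rep_le_def by auto

lemma rep_le_sim_le_left:
  assumes "a \<in> W" "b \<in> W" "rep_le a b"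
  obtains a' where "(a', a) \<in> sim" "le a' b"
proof -
  have "lab a \<in> L b"
    using lab_in_Lset[OF assms(1)] assms(3) unfolding rep_le_def by simp
  then obtain z where z: "z \<in> W" "comparable le z b" "lab z = lab a"
    unfolding Lset_def by blast
  have "L z = L a"
    using Lset_eq_if_comparable[OF z(1) assms(2) z(2)] assms(3) unfolding rep_le_def by simp
  show thesis
  proof (cases "le z b")
    case True
    have "(z, a) \<in> sim"
      using z(1,3) \<open>L z = L a\<close> assms(1) by (simp add: sim_iff)
    from this True show thesis by (rule that)
  next
    case False
    then have "lab z \<subseteq> lab b"
      using z(1,2) assms(2) lab_antimono unfolding comparable_def by blast
    then have "(b, a) \<in> sim"
      using z(3) assms unfolding rep_le_def sim_iff by auto
    from this le_refl[OF assms(2)] show thesis by (rule that)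
  qed
qed

lemma rep_le_le_sim_right:
  assumes "a \<in> W" "b \<in> W" "rep_le a b"
  obtains b' where "(b', b) \<in> sim" "le a b'"
proof -
  have "lab b \<in> L a"
    using lab_in_Lset[OF assms(2)] assms(3) unfolding rep_le_def by simp
  then obtain z where z: "z \<in> W" "comparable le z a" "lab z = lab b"
    unfolding Lset_def by blast
  have "L z = L b"
    using Lset_eq_if_comparable[OF z(1) assms(1) z(2)] assms(3) unfolding rep_le_def by simp
  show thesis
  proof (cases "le a z")
    case True
    have "(z, b) \<in> sim"
      using z(1,3) \<open>L z = L b\<close> assms(2) by (simp add: sim_iff)
    from this True show thesis by (rule that)
  next
    case False
    then have "lab a \<subseteq> lab z"
      using z(1,2) assms(1) lab_antimono unfolding comparable_def by blast
    then have "(a, b) \<in> sim"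
      using z(3) assms unfolding rep_le_def sim_iff by auto
    from this le_refl[OF assms(1)] show thesis by (rule that)
  qed
qed

lemma sim_forth_down:
  assumes "x \<in> W" "rep_le x x'" "R x' y'"
  obtains x\<^sub>0 y where "(x\<^sub>0, x) \<in> sim" "R x\<^sub>0 y" "le y y'"
proof -
  obtain x\<^sub>0 where "(x\<^sub>0, x) \<in> sim" "le x\<^sub>0 x'"
    using rep_le_sim_le_left assms R_dom by blast
  moreover obtain y where "R x\<^sub>0 y" "le y y'"
    using forth_down[OF \<open>le x\<^sub>0 x'\<close> assms(3)] \<open>(x\<^sub>0, x) \<in> sim\<close> sim_iff by blast
  ultimately show thesis using that by blast
qed

lemma sim_forth_up:
  assumes "x' \<in> W" "rep_le x x'" "R x y"
  obtains x\<^sub>0 y' where "(x\<^sub>0, x') \<in> sim" "R x\<^sub>0 y'" "le y y'"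
proof -
  obtain x\<^sub>0 where "(x\<^sub>0, x') \<in> sim" "le x x\<^sub>0"
    using rep_le_le_sim_right assms R_dom by blast
  moreover obtain y' where "R x\<^sub>0 y'" "le y y'"
    using forth_up[OF \<open>le x x\<^sub>0\<close> assms(3)] \<open>(x\<^sub>0, x') \<in> sim\<close> sim_iff by blast
  ultimately show thesis using that by blast
qed

lemma sim_back_down:
  assumes "y \<in> W" "rep_le y y'" "R x' y'"
  obtains x y\<^sub>0 where "(y\<^sub>0, y) \<in> sim" "le x x'" "R x y\<^sub>0"
proof -
  obtain y\<^sub>0 where "(y\<^sub>0, y) \<in> sim" "le y\<^sub>0 y'"
    using rep_le_sim_le_left assms R_dom by blast
  moreover obtain x where "le x x'" "R x y\<^sub>0"
    using back_down[OF assms(3) \<open>le y\<^sub>0 y'\<close>] \<open>(y\<^sub>0, y) \<in> sim\<close> sim_iff by blast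
  ultimately show thesis using that by blast
qed

lemma sim_back_up:
  assumes "y' \<in> W" "rep_le y y'" "R x y"
  obtains x' y\<^sub>0 where "(y\<^sub>0, y') \<in> sim" "le x x'" "R x' y\<^sub>0"
proof -
  obtain y\<^sub>0 where "(y\<^sub>0, y') \<in> sim" "le y y\<^sub>0"
    using rep_le_le_sim_right assms R_dom by blast
  moreover obtain x' where "le x x'" "R x' y\<^sub>0"
    using back_up[OF assms(3) \<open>le y y\<^sub>0\<close>] \<open>(y\<^sub>0, y') \<in> sim\<close> sim_iff by blast
  ultimately show thesis using that by blast
qed

lemma rep_R_if_sim_R:
  assumes "(x\<^sub>0, x) \<in> sim" "(y\<^sub>0, y) \<in> sim" "R x\<^sub>0 y\<^sub>0"
  shows "rep_R x y"
proof -
  have "rep_le x\<^sub>0 x" "rep_le x x\<^sub>0" "rep_le y\<^sub>0 y" "rep_le y y\<^sub>0"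
    using assms(1,2) by (auto simp: rep_le_def sim_iff)
  then show ?thesis
    unfolding rep_R_def using assms(3) by blast
qed

lemma rep_R_if_R: "R x y \<Longrightarrow> rep_R x y"
  unfolding rep_R_def using rep_le_refl by blast

lemma rep_bi_serial: "bi_serial W rep_R"
  using system rep_R_if_R unfolding labelled_system_def bi_serial_def by meson

lemma rep_R_convex_right:
  assumes "rep_R x a" "rep_R x b" "rep_le a c" "rep_le c b"
  shows "rep_R x c"
proof -
  obtain w\<^sub>2 v\<^sub>1 where "R w\<^sub>2 v\<^sub>1" "rep_le x w\<^sub>2" "rep_le v\<^sub>1 a"
    using assms(1) unfolding rep_R_def by blast
  moreover obtain w\<^sub>1 v\<^sub>2 where "R w\<^sub>1 v\<^sub>2" "rep_le w\<^sub>1 x" "rep_le b v\<^sub>2"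
    using assms(2) unfolding rep_R_def by blast
  ultimately show ?thesis
    unfolding rep_R_def using assms(3,4) rep_le_trans by blast
qed

lemma rep_R_convex_left:
  assumes "rep_R a y" "rep_R b y" "rep_le a c" "rep_le c b"
  shows "rep_R c y"
proof -
  obtain w\<^sub>1 v\<^sub>2 where "R w\<^sub>1 v\<^sub>2" "rep_le w\<^sub>1 a" "rep_le y v\<^sub>2"
    using assms(1) unfolding rep_R_def by blast
  moreover obtain w\<^sub>2 v\<^sub>1 where "R w\<^sub>2 v\<^sub>1" "rep_le b w\<^sub>2" "rep_le v\<^sub>1 y"
    using assms(2) unfolding rep_R_def by blast
  ultimately show ?thesis
    unfolding rep_R_def using assms(3,4) rep_le_trans by blast
qed

lemma rep_convex: "convex_rel W rep_le rep_R"
  unfolding convex_rel_iff using rep_R_convex_right rep_R_convex_left by blast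

lemma rep_forth_down:
  assumes "x \<in> W" "rep_le x x'" "rep_R x' y'"
  obtains y where "y \<in> W" "rep_R x y" "rep_le y y'"
proof -
  obtain w\<^sub>2 v\<^sub>1 where "R w\<^sub>2 v\<^sub>1" "rep_le x w\<^sub>2" "rep_le v\<^sub>1 y'"
    using assms(2,3) unfolding rep_R_def using rep_le_trans by blast
  moreover obtain x\<^sub>0 y where "(x\<^sub>0, x) \<in> sim" "R x\<^sub>0 y" "le y v\<^sub>1"
    using sim_forth_down assms(1) calculation by blast
  moreover have "y \<in> W" "v\<^sub>1 \<in> W"
    using R_dom calculation by blast+
  ultimately show thesis
    using that rep_R_if_sim_R sim_refl rep_le_if_le rep_le_trans by blast
qed

lemma rep_forth_up:
  assumes "x' \<in> W" "rep_le x x'" "rep_R x y"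
  obtains y' where "y' \<in> W" "rep_R x' y'" "rep_le y y'"
proof -
  obtain w\<^sub>1 v\<^sub>2 where "R w\<^sub>1 v\<^sub>2" "rep_le w\<^sub>1 x'" "rep_le y v\<^sub>2"
    using assms(2,3) unfolding rep_R_def using rep_le_trans by blast
  moreover obtain x\<^sub>0 y' where "(x\<^sub>0, x') \<in> sim" "R x\<^sub>0 y'" "le v\<^sub>2 y'"
    using sim_forth_up assms(1) calculation by blast
  moreover have "y' \<in> W" "v\<^sub>2 \<in> W"
    using R_dom calculation by blast+
  ultimately show thesis
    using that rep_R_if_sim_R sim_refl rep_le_if_le rep_le_trans by blast
qed

lemma rep_back_down:
  assumes "y \<in> W" "rep_le y y'" "rep_R x' y'"
  obtains x where "x \<in> W" "rep_le x x'" "rep_R x y"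
proof -
  obtain w\<^sub>1 v\<^sub>2 where "R w\<^sub>1 v\<^sub>2" "rep_le w\<^sub>1 x'" "rep_le y v\<^sub>2"
    using assms(2,3) unfolding rep_R_def using rep_le_trans by blast
  moreover obtain x y\<^sub>0 where "(y\<^sub>0, y) \<in> sim" "le x w\<^sub>1" "R x y\<^sub>0"
    using sim_back_down assms(1) calculation by blast
  moreover have "x \<in> W" "w\<^sub>1 \<in> W"
    using R_dom calculation by blast+
  ultimately show thesis
    using that rep_R_if_sim_R sim_refl rep_le_if_le rep_le_trans by blast
qed

lemma rep_back_up:
  assumes "y' \<in> W" "rep_le y y'" "rep_R x y"
  obtains x' where "x' \<in> W" "rep_le x x'" "rep_R x' y'"
proof -
  obtain w\<^sub>2 v\<^sub>1 where "R w\<^sub>2 v\<^sub>1" "rep_le x w\<^sub>2" "rep_le v\<^sub>1 y'"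
    using assms(2,3) unfolding rep_R_def using rep_le_trans by blast
  moreover obtain x' y\<^sub>0 where "(y\<^sub>0, y') \<in> sim" "le w\<^sub>2 x'" "R x' y\<^sub>0"
    using sim_back_up assms(1) calculation by blast
  moreover have "x' \<in> W" "w\<^sub>2 \<in> W"
    using R_dom calculation by blast+
  ultimately show thesis
    using that rep_R_if_sim_R sim_refl rep_le_if_le rep_le_trans by blast
qed

lemma rep_fully_confluent: "fully_confluent W rep_le rep_R"
  unfolding fully_confluent_def
  by (meson rep_forth_down rep_forth_up rep_back_down rep_back_up)

lemma rep_R_upper_sensible:
  assumes "x \<in> W" "y \<in> W" "R w v" "rep_le x w" "rep_le v y"
  obtains A B where "sensible_pair \<Sigma> (lab x) B" "lab y \<subseteq> B"
    and "sensible_pair \<Sigma> A (lab y)" "A \<subseteq> lab x"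
proof -
  obtain x\<^sub>0 y\<^sub>1 where x\<^sub>0: "(x\<^sub>0, x) \<in> sim" "R x\<^sub>0 y\<^sub>1" "le y\<^sub>1 v"
    using sim_forth_down assms(1,3,4) by blast
  have "y\<^sub>1 \<in> W" "v \<in> W"
    using R_dom x\<^sub>0(2) assms(3) by blast+
  then have "rep_le y\<^sub>1 y"
    using rep_le_trans rep_le_if_le x\<^sub>0(3) assms(5) by blast
  then obtain x' y\<^sub>0 where y\<^sub>0: "(y\<^sub>0, y) \<in> sim" "le x\<^sub>0 x'" "R x' y\<^sub>0"
    using sim_back_up assms(2) x\<^sub>0(2) by blast
  have "x\<^sub>0 \<in> W" "x' \<in> W"
    using R_dom x\<^sub>0(2) y\<^sub>0(3) by blast+
  show thesis
  proof (rule that)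
    show "sensible_pair \<Sigma> (lab x) (lab y\<^sub>1)"
      using sensible_R[OF x\<^sub>0(2)] x\<^sub>0(1) by (simp add: sim_iff)
    show "sensible_pair \<Sigma> (lab x') (lab y)"
      using sensible_R[OF y\<^sub>0(3)] y\<^sub>0(1) by (simp add: sim_iff)
    show "lab y \<subseteq> lab y\<^sub>1"
      using \<open>rep_le y\<^sub>1 y\<close> by (simp add: rep_le_def)
    show "lab x' \<subseteq> lab x"
      using lab_antimono[OF \<open>x\<^sub>0 \<in> W\<close> \<open>x' \<in> W\<close> y\<^sub>0(2)] x\<^sub>0(1) by (simp add: sim_iff)
  qed
qed

lemma rep_R_lower_sensible:
  assumes "x \<in> W" "y \<in> W" "R w v" "rep_le w x" "rep_le y v"
  obtains A B where "sensible_pair \<Sigma> A (lab y)" "lab x \<subseteq> A"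
    and "sensible_pair \<Sigma> (lab x) B" "B \<subseteq> lab y"
proof -
  obtain x\<^sub>1 y\<^sub>0 where y\<^sub>0: "(y\<^sub>0, y) \<in> sim" "le x\<^sub>1 w" "R x\<^sub>1 y\<^sub>0"
    using sim_back_down assms(2,3,5) by blast
  have "x\<^sub>1 \<in> W" "w \<in> W"
    using R_dom y\<^sub>0(3) assms(3) by blast+
  then have "rep_le x\<^sub>1 x"
    using rep_le_trans rep_le_if_le y\<^sub>0(2) assms(4) by blast
  then obtain x\<^sub>0 y' where x\<^sub>0: "(x\<^sub>0, x) \<in> sim" "R x\<^sub>0 y'" "le y\<^sub>0 y'"
    using sim_forth_up assms(1) y\<^sub>0(3) by blast
  have "y\<^sub>0 \<in> W" "y' \<in> W"
    using R_dom y\<^sub>0(3) x\<^sub>0(2) by blast+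
  show thesis
  proof (rule that)
    show "sensible_pair \<Sigma> (lab x\<^sub>1) (lab y)"
      using sensible_R[OF y\<^sub>0(3)] y\<^sub>0(1) by (simp add: sim_iff)
    show "sensible_pair \<Sigma> (lab x) (lab y')"
      using sensible_R[OF x\<^sub>0(2)] x\<^sub>0(1) by (simp add: sim_iff)
    show "lab x \<subseteq> lab x\<^sub>1"
      using \<open>rep_le x\<^sub>1 x\<close> by (simp add: rep_le_def)
    show "lab y' \<subseteq> lab y"
      using lab_antimono[OF \<open>y\<^sub>0 \<in> W\<close> \<open>y' \<in> W\<close> x\<^sub>0(3)] y\<^sub>0(1) by (simp add: sim_iff)
  qed
qed

lemma rep_R_sensible:
  assumes "x \<in> W" "y \<in> W" "rep_R x y"
  shows "sensible_pair \<Sigma> (lab x) (lab y)"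
proof -
  obtain w\<^sub>1 w\<^sub>2 v\<^sub>1 v\<^sub>2 where upper: "R w\<^sub>2 v\<^sub>1" "rep_le x w\<^sub>2" "rep_le v\<^sub>1 y"
    and lower: "R w\<^sub>1 v\<^sub>2" "rep_le w\<^sub>1 x" "rep_le y v\<^sub>2"
    using assms(3) unfolding rep_R_def by blast
  obtain A\<^sub>1 B\<^sub>1 where "sensible_pair \<Sigma> (lab x) B\<^sub>1" "lab y \<subseteq> B\<^sub>1"
    "sensible_pair \<Sigma> A\<^sub>1 (lab y)" "A\<^sub>1 \<subseteq> lab x"
    using rep_R_upper_sensible[OF assms(1,2) upper] .
  moreover obtain A\<^sub>2 B\<^sub>2 where "sensible_pair \<Sigma> A\<^sub>2 (lab y)" "lab x \<subseteq> A\<^sub>2"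
    "sensible_pair \<Sigma> (lab x) B\<^sub>2" "B\<^sub>2 \<subseteq> lab y"
    using rep_R_lower_sensible[OF assms(1,2) lower] .
  ultimately show ?thesis
    by (rule sensible_pair_sandwich)
qed

lemma quot_le_cls:
  assumes "x \<in> W" "y \<in> W"
  shows "quot_le W le lab (cls x) (cls y) \<longleftrightarrow> rep_le x y"
  unfolding quot_le_def rep_le_def
proof
  assume "\<exists>w\<in>cls x. \<exists>v\<in>cls y. L w = L v \<and> lab v \<subseteq> lab w"
  then show "L x = L y \<and> lab y \<subseteq> lab x"
    by (auto simp: sim_iff)
next
  assume "L x = L y \<and> lab y \<subseteq> lab x"
  then show "\<exists>w\<in>cls x. \<exists>v\<in>cls y. L w = L v \<and> lab v \<subseteq> lab w"
    using sim_refl[OF assms(1)] sim_refl[OF assms(2)] by blast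
qed

lemma quot_R_cls: "R w v \<Longrightarrow> quot_R W le lab R (cls w) (cls v)"
  unfolding quot_R_def by blast

lemma cls_in_quotW: "x \<in> W \<Longrightarrow> cls x \<in> quotW W le lab"
  by (simp add: quotW_eq)

lemma quot_Rplus_cls:
  assumes "x \<in> W" "y \<in> W"
  shows "quot_Rplus W le lab R (cls x) (cls y) \<longleftrightarrow> rep_R x y"
proof
  assume "quot_Rplus W le lab R (cls x) (cls y)"
  then obtain X\<^sub>1 X\<^sub>2 Y\<^sub>1 Y\<^sub>2 where le: "quot_le W le lab X\<^sub>1 (cls x)" "quot_le W le lab (cls x) X\<^sub>2"
      "quot_le W le lab Y\<^sub>1 (cls y)" "quot_le W le lab (cls y) Y\<^sub>2"
    and "quot_R W le lab R X\<^sub>2 Y\<^sub>1" "quot_R W le lab R X\<^sub>1 Y\<^sub>2"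
    unfolding quot_Rplus_def by blast
  then obtain w\<^sub>1 w\<^sub>2 v\<^sub>1 v\<^sub>2 where R: "R w\<^sub>2 v\<^sub>1" "R w\<^sub>1 v\<^sub>2"
    and cls: "X\<^sub>1 = cls w\<^sub>1" "X\<^sub>2 = cls w\<^sub>2" "Y\<^sub>1 = cls v\<^sub>1" "Y\<^sub>2 = cls v\<^sub>2"
    unfolding quot_R_def by blast
  have "w\<^sub>1 \<in> W" "w\<^sub>2 \<in> W" "v\<^sub>1 \<in> W" "v\<^sub>2 \<in> W"
    using R_dom R by blast+
  then have "rep_le w\<^sub>1 x" "rep_le x w\<^sub>2" "rep_le v\<^sub>1 y" "rep_le y v\<^sub>2"
    using le unfolding cls by (simp_all add: quot_le_cls assms)
  with R show "rep_R x y"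
    unfolding rep_R_def by blast
next
  assume "rep_R x y"
  then obtain w\<^sub>1 w\<^sub>2 v\<^sub>1 v\<^sub>2 where R: "R w\<^sub>2 v\<^sub>1" "R w\<^sub>1 v\<^sub>2"
    and le: "rep_le w\<^sub>1 x" "rep_le x w\<^sub>2" "rep_le v\<^sub>1 y" "rep_le y v\<^sub>2"
    unfolding rep_R_def by blast
  have W: "w\<^sub>1 \<in> W" "w\<^sub>2 \<in> W" "v\<^sub>1 \<in> W" "v\<^sub>2 \<in> W"
    using R_dom R by blast+
  then have "quot_le W le lab (cls w\<^sub>1) (cls x)" "quot_le W le lab (cls x) (cls w\<^sub>2)"
    "quot_le W le lab (cls v\<^sub>1) (cls y)" "quot_le W le lab (cls y) (cls v\<^sub>2)"
    using le by (simp_all add: quot_le_cls assms)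
  then show "quot_Rplus W le lab R (cls x) (cls y)"
    unfolding quot_Rplus_def
    using cls_in_quotW assms W quot_R_cls[OF R(1)] quot_R_cls[OF R(2)] by blast
qed

lemma quot_le_locally_linear: "locally_linear (cls ` W) (quot_le W le lab)"
  by (rule locally_linear_image[where le = rep_le])
    (auto simp: quot_le_cls rep_le_comparable_iff cls_eq_iff rep_le_def)

lemma quot_labelled_space: "labelled_space \<Sigma> (cls ` W) (quot_le W le lab) (quot_lab lab)"
  by (rule labelled_space_image_coarser[where lec = rep_le, OF space rep_le_if_le])
    (auto simp: rep_le_def quot_le_cls quot_lab_cls quot_le_locally_linear)

lemma quot_Rplus_dom: "quot_Rplus W le lab R X Y \<Longrightarrow> X \<in> cls ` W \<and> Y \<in> cls ` W"
  unfolding quot_Rplus_def quotW_eq by simp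

end

theorem proposition6p2:
  fixes \<Sigma> :: "'a fml set" and W :: "'w set" and le R :: "'w \<Rightarrow> 'w \<Rightarrow> bool"
    and lab :: "'w \<Rightarrow> 'a fml set"
  assumes "subfml_closed \<Sigma>"
    and "labelled_system \<Sigma> W le lab R"
  shows "labelled_system \<Sigma> (quotW W le lab) (quot_le W le lab) (quot_lab lab)
           (quot_Rplus W le lab R)"
proof -
  interpret labelled_sys \<Sigma> W le R lab
    using assms(2) by unfold_locales
  have "bi_serial (cls ` W) (quot_Rplus W le lab R)"
    using rep_bi_serial by (subst bi_serial_image) (simp_all add: quot_Rplus_cls)
  moreover have "fully_confluent (cls ` W) (quot_le W le lab) (quot_Rplus W le lab R)"
    using rep_fully_confluent
    by (subst fully_confluent_image) (simp_all add: quot_le_cls quot_Rplus_cls)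
  moreover have "convex_rel (cls ` W) (quot_le W le lab) (quot_Rplus W le lab R)"
    using rep_convex by (subst convex_rel_image) (simp_all add: quot_le_cls quot_Rplus_cls)
  moreover have "\<forall>X\<in>cls ` W. \<forall>Y\<in>cls ` W. quot_Rplus W le lab R X Y \<longrightarrow>
      sensible_pair \<Sigma> (quot_lab lab X) (quot_lab lab Y)"
    by (auto simp: quot_Rplus_cls quot_lab_cls rep_R_sensible)
  ultimately show ?thesis
    unfolding labelled_system_def quotW_eq using quot_labelled_space quot_Rplus_dom by blast
qed

end
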